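(* For every formula $\varphi$ of $\mathcal L^{\bigcirc}_\square$: $\varphi$ is derivable in $\mathbf{GLC}$ if and only if $\varphi$ is valid, with respect to the $d$-semantics, on every dynamic topological system $\langle X,\tau,f\rangle$ with $X$ finite and $\langle X,\tau\rangle$ scattered.
   Context: Fix a non-empty set $\mathsf{PV}$ of propositional variables. The language $\mathcal L^{\bigcirc}_\square$ is given by $\varphi::= p\mid \varphi\wedge\varphi\mid\neg\varphi\mid\square\varphi\mid\bigcirc\varphi$ with $p\in\mathsf{PV}$. Axioms and rules: Taut; K: $\square(\varphi\to\psi)\to(\square\varphi\to\square\psi)$; 4: $\square\varphi\to\square\square\varphi$; L: $\square(\square\varphi\to\varphi)\to\square\varphi$; ${\rm Next}_\neg$: $\neg\bigcirc\varphi\leftrightarrow\bigcirc\neg\varphi$; ${\rm Next}_\wedge$: $\bigcirc(\varphi\wedge\psi)\leftrightarrow\bigcirc\varphi\wedge\bigcirc\psi$; C: $\bigcirc\varphi\wedge\bigcirc\square\varphi\to\square\bigcirc\varphi$; rules modus ponens, ${\rm Nec}_\square$, ${\rm Nec}_\bigcirc$. $\mathbf{GLC}$ is axiomatised by Taut, K, 4, L, ${\rm Next}_\neg$, ${\rm Next}_\wedge$, C and closed under these rules. A dynamic topological system (DTS) is $\langle X,\tau,f\rangle$ with $f\colon X\to X$ continuous. The Cantor derivative $d(A)$ of $A\subseteq X$ is the set of $x$ in the closure of $A\setminus\{x\}$. A space is scattered if for every $S\subseteq X$, $S\subseteq d(S)$ implies $S=\varnothing$. Under a valuation $\nu\colon\mathsf{PV}\to\wp(X)$: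 $\|p\|=\nu(p)$, $\|\neg\varphi\|=X\setminus\|\varphi\|$, $\|\varphi\wedge\psi\|=\|\varphi\|\cap\|\psi\|$, $\|\square\varphi\|=X\setminus d(\|\neg\varphi\|)$, $\|\bigcirc\varphi\|=f^{-1}(\|\varphi\|)$. Valid on a DTS means truth set $X$ under every valuation. *)

theory Defs
  imports "HOL-Analysis.Analysis"
begin

datatype 'p form =
    Var 'p
  | And "'p form" "'p form"
  | Neg "'p form"
  | Box "'p form"
  | Nxt "'p form"

definition Imp :: "'p form \<Rightarrow> 'p form \<Rightarrow> 'p form" where
  "Imp a b = Neg (And a (Neg b))"

definition Iff :: "'p form \<Rightarrow> 'p form \<Rightarrow> 'p form" where
  "Iff a b = And (Imp a b) (Imp b a)"

fun tval :: "('p form \<Rightarrow> bool) \<Rightarrow> 'p form \<Rightarrow> bool" where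
  "tval v (Var p) = v (Var p)"
| "tval v (And a b) = (tval v a \<and> tval v b)"
| "tval v (Neg a) = (\<not> tval v a)"
| "tval v (Box a) = v (Box a)"
| "tval v (Nxt a) = v (Nxt a)"

definition taut :: "'p form \<Rightarrow> bool" where
  "taut \<phi> \<longleftrightarrow> (\<forall>v. tval v \<phi>)"

inductive GLC :: "'p form \<Rightarrow> bool" where
  Taut: "taut \<phi> \<Longrightarrow> GLC \<phi>"
| K: "GLC (Imp (Box (Imp \<phi> \<psi>)) (Imp (Box \<phi>) (Box \<psi>)))"
| Four: "GLC (Imp (Box \<phi>) (Box (Box \<phi>)))"
| L: "GLC (Imp (Box (Imp (Box \<phi>) \<phi>)) (Box \<phi>))"
| Next_neg: "GLC (Iff (Neg (Nxt \<phi>)) (Nxt (Neg \<phi>)))"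
| Next_and: "GLC (Iff (Nxt (And \<phi> \<psi>)) (And (Nxt \<phi>) (Nxt \<psi>)))"
| C: "GLC (Imp (And (Nxt \<phi>) (Nxt (Box \<phi>))) (Box (Nxt \<phi>)))"
| MP: "GLC (Imp \<phi> \<psi>) \<Longrightarrow> GLC \<phi> \<Longrightarrow> GLC \<psi>"
| Nec_box: "GLC \<phi> \<Longrightarrow> GLC (Box \<phi>)"
| Nec_next: "GLC \<phi> \<Longrightarrow> GLC (Nxt \<phi>)"

definition DTS :: "'a topology \<Rightarrow> ('a \<Rightarrow> 'a) \<Rightarrow> bool" where
  "DTS T f \<longleftrightarrow> continuous_map T T f"

definition scattered :: "'a topology \<Rightarrow> bool" where
  "scattered T \<longleftrightarrow> (\<forall>S. S \<subseteq> topspace T \<longrightarrow> S \<subseteq> T derived_set_of S \<longrightarrow> S = {})"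

fun sem :: "'a topology \<Rightarrow> ('a \<Rightarrow> 'a) \<Rightarrow> ('p \<Rightarrow> 'a set) \<Rightarrow> 'p form \<Rightarrow> 'a set" where
  "sem T f \<nu> (Var p) = \<nu> p"
| "sem T f \<nu> (And a b) = sem T f \<nu> a \<inter> sem T f \<nu> b"
| "sem T f \<nu> (Neg a) = topspace T - sem T f \<nu> a"
| "sem T f \<nu> (Box a) = topspace T - T derived_set_of (topspace T - sem T f \<nu> a)"
| "sem T f \<nu> (Nxt a) = {x \<in> topspace T. f x \<in> sem T f \<nu> a}"

definition valid_on :: "'a topology \<Rightarrow> ('a \<Rightarrow> 'a) \<Rightarrow> 'p form \<Rightarrow> bool" where
  "valid_on T f \<phi> \<longleftrightarrow>
     (\<forall>\<nu>. (\<forall>p. \<nu> p \<subseteq> topspace T) \<longrightarrow> sem T f \<nu> \<phi> = topspace T)"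

end

theory Submission
  imports Defs
begin

text \<open>
  Soundness: in a finite space, \<open>x\<close> is in the derived set of \<open>A\<close> iff \<open>x\<close> lies in the closure
  of some \<open>y \<in> A\<close> different from \<open>x\<close>. So a finite scattered system is a finite frame with an
  irreflexive transitive relation \<open>R\<close>, read by Box as ``all \<open>R\<close>-successors'', and continuity of
  \<open>f\<close> says that \<open>R x y\<close> implies \<open>f x = f y\<close> or \<open>R (f x) (f y)\<close>. Finiteness and
  irreflexivity validate Loeb's axiom, the condition on \<open>f\<close> validates C.

  Completeness: a non-theorem \<open>\<phi>\<close> is refuted in a finite frame of this kind. A world is a time
  \<open>k\<close>, bounded by the Nxt-depth of \<open>\<phi>\<close>, with a chain of maximal consistent sets (atoms) over
  the closure of \<open>\<phi>\<close> relevant at time \<open>k\<close>, consecutive atoms being linked by Dia. A world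
  sees its proper extensions, and \<open>f\<close> replaces every atom by the set of formulas whose Nxt it
  contains; by axiom C this yields a chain again after deleting adjacent repetitions. Box-witnesses
  come from Loeb's axiom and strictly enlarge the boxed part of the last atom, which keeps chains
  short and the frame finite. The frame is then copied onto \<open>nat\<close> and given the topology of
  up-sets.
\<close>

definition Top :: "'p form" where
  "Top = Imp (Var undefined) (Var undefined)"

definition Dia :: "'p form \<Rightarrow> 'p form" where
  "Dia a = Neg (Box (Neg a))"

lemma tval_Imp [simp]: "tval v (Imp a b) \<longleftrightarrow> (tval v a \<longrightarrow> tval v b)"
  by (simp add: Imp_def)

lemma tval_Iff [simp]: "tval v (Iff a b) \<longleftrightarrow> (tval v a \<longleftrightarrow> tval v b)"
  by (auto simp add: Iff_def)

lemma tval_Top [simp]: "tval v Top"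
  by (simp add: Top_def)

lemma GLC_tautI: "(\<And>v. tval v a) \<Longrightarrow> GLC a"
  by (rule GLC.Taut) (simp add: taut_def)

lemma GLC_taut_consequence: "GLC a \<Longrightarrow> (\<And>v. tval v a \<Longrightarrow> tval v b) \<Longrightarrow> GLC b"
  by (rule GLC.MP[of a]) (auto intro: GLC_tautI)

lemma GLC_taut_consequence2:
  assumes "GLC a" "GLC b" "\<And>v. tval v a \<Longrightarrow> tval v b \<Longrightarrow> tval v c"
  shows "GLC c"
proof -
  have "GLC (Imp a (Imp b c))" by (rule GLC_tautI) (simp add: assms(3))
  then show ?thesis using assms(1,2) GLC.MP by blast
qed

lemma GLC_taut_consequence3:
  assumes "GLC a" "GLC b" "GLC c" "\<And>v. tval v a \<Longrightarrow> tval v b \<Longrightarrow> tval v c \<Longrightarrow> tval v d"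
  shows "GLC d"
proof -
  have "GLC (And a b)" using assms(1,2) by (rule GLC_taut_consequence2) simp
  then show ?thesis using assms(3) by (rule GLC_taut_consequence2) (auto intro: assms(4))
qed

lemma GLC_Box_mono: "GLC (Imp a b) \<Longrightarrow> GLC (Imp (Box a) (Box b))"
  using GLC.MP[OF GLC.K GLC.Nec_box] by blast

lemma GLC_Box_And: "GLC (Imp (And (Box a) (Box b)) (Box (And a b)))"
proof -
  have "GLC (Imp (Box a) (Box (Imp b (And a b))))" by (rule GLC_Box_mono, rule GLC_tautI) simp
  then show ?thesis using GLC.K by (rule GLC_taut_consequence2) auto
qed

lemma GLC_Nxt_Neg_out: "GLC (Imp (Nxt (Neg a)) (Neg (Nxt a)))"
  using GLC.Next_neg[of a] by (rule GLC_taut_consequence) auto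

lemma GLC_Nxt_Neg_in: "GLC (Imp (Neg (Nxt a)) (Nxt (Neg a)))"
  using GLC.Next_neg[of a] by (rule GLC_taut_consequence) auto

lemma GLC_Nxt_And_in: "GLC (Imp (And (Nxt a) (Nxt b)) (Nxt (And a b)))"
  using GLC.Next_and[of a b] by (rule GLC_taut_consequence) auto

lemma GLC_Nxt_mono:
  assumes "GLC (Imp a b)"
  shows "GLC (Imp (Nxt a) (Nxt b))"
proof -
  have "GLC (Nxt (Neg (And a (Neg b))))" using GLC.Nec_next[OF assms] by (simp add: Imp_def)
  then have "GLC (Neg (Nxt (And a (Neg b))))" using GLC_Nxt_Neg_out by (rule GLC_taut_consequence2) auto
  then show ?thesis using GLC_Nxt_And_in[of a "Neg b"] GLC_Nxt_Neg_in[of b] by (rule GLC_taut_consequence3) auto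
qed

definition consistent :: "'p form \<Rightarrow> bool" where
  "consistent a \<longleftrightarrow> \<not> GLC (Neg a)"

lemma consistent_mono: "GLC (Imp a b) \<Longrightarrow> consistent a \<Longrightarrow> consistent b"
  unfolding consistent_def using GLC_taut_consequence2 by fastforce

lemma consistent_conjunct: "consistent (And a b) \<Longrightarrow> consistent b"
  by (erule consistent_mono[rotated]) (rule GLC_tautI, simp)

lemma consistent_imp_satisfiable: "consistent a \<Longrightarrow> \<exists>v. tval v a"
  unfolding consistent_def using GLC_tautI[of "Neg a"] by auto

lemma consistent_split: "consistent a \<Longrightarrow> consistent (And a \<theta>) \<or> consistent (And a (Neg \<theta>))"
  unfolding consistent_def using GLC_taut_consequence2 by fastforce

lemma consistent_Nxt: "consistent (Nxt a) \<Longrightarrow> consistent a"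
  unfolding consistent_def using GLC.Nec_next GLC_Nxt_Neg_out GLC.MP by blast

lemma consistent_Dia_Box:
  assumes "consistent (And X (Dia Y))" "GLC (Imp X (Box Z))"
  shows "consistent (And Y Z)"
proof (rule ccontr)
  assume "\<not> consistent (And Y Z)"
  then have "GLC (Neg (And Y Z))" by (simp add: consistent_def)
  then have "GLC (Imp Z (Neg Y))" by (rule GLC_taut_consequence) auto
  then have "GLC (Imp (Box Z) (Box (Neg Y)))" by (rule GLC_Box_mono)
  with assms(2) have "GLC (Neg (And X (Dia Y)))" by (rule GLC_taut_consequence2) (auto simp: Dia_def)
  with assms(1) show False by (simp add: consistent_def)
qed

lemma consistent_Dia:
  assumes "consistent (And X (Dia Y))"
  shows "consistent Y"
proof (rule ccontr)
  assume "\<not> consistent Y"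
  then have "GLC (Box (Neg Y))" by (simp add: consistent_def GLC.Nec_box)
  then have "GLC (Neg (And X (Dia Y)))" by (rule GLC_taut_consequence) (simp add: Dia_def)
  with assms show False by (simp add: consistent_def)
qed

lemma consistent_Dia_mono:
  assumes "GLC (Imp Y Y')" "consistent (And X (Dia Y))"
  shows "consistent (And X (Dia Y'))"
proof -
  have "GLC (Imp (Neg Y') (Neg Y))" using assms(1) by (rule GLC_taut_consequence) auto
  then have "GLC (Imp (Box (Neg Y')) (Box (Neg Y)))" by (rule GLC_Box_mono)
  then show ?thesis
    by (rule consistent_mono[OF _ assms(2), OF GLC_taut_consequence]) (auto simp: Dia_def)
qed

lemma consistent_Dia_split:
  assumes "consistent (And X (Dia Y))"
  shows "consistent (And X (Dia (And Y \<theta>))) \<or> consistent (And X (Dia (And Y (Neg \<theta>))))"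
proof (rule ccontr)
  let ?a = "Neg (And Y \<theta>)" and ?b = "Neg (And Y (Neg \<theta>))"
  assume "\<not> ?thesis"
  then have "GLC (Imp X (Box ?a))" "GLC (Imp X (Box ?b))"
    by (auto simp: consistent_def Dia_def intro: GLC_taut_consequence)
  then have "GLC (Imp X (Box (And ?a ?b)))" using GLC_Box_And[of ?a ?b] by (rule GLC_taut_consequence3) auto
  moreover have "GLC (Imp (Box (And ?a ?b)) (Box (Neg Y)))" by (rule GLC_Box_mono, rule GLC_tautI) auto
  ultimately have "GLC (Neg (And X (Dia Y)))" by (rule GLC_taut_consequence2) (auto simp: Dia_def)
  with assms show False by (simp add: consistent_def)
qed

fun conj_list :: "'p form list \<Rightarrow> 'p form" where
  "conj_list [] = Top"
| "conj_list (a # as) = And a (conj_list as)"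

definition literal :: "'p form set \<Rightarrow> 'p form \<Rightarrow> 'p form" where
  "literal A \<theta> = (if \<theta> \<in> A then \<theta> else Neg \<theta>)"

definition diagram :: "'p form list \<Rightarrow> 'p form set \<Rightarrow> 'p form" where
  "diagram xs A = conj_list (map (literal A) xs)"

lemma tval_conj_list [simp]: "tval v (conj_list as) \<longleftrightarrow> (\<forall>a\<in>set as. tval v a)"
  by (induction as) auto

lemma tval_diagram: "tval v (diagram xs A) \<longleftrightarrow> (\<forall>\<theta>\<in>set xs. tval v \<theta> \<longleftrightarrow> \<theta> \<in> A)"
  unfolding diagram_def literal_def by (induction xs) auto

lemma lindenbaum:
  assumes split: "\<And>a \<theta>. P a \<Longrightarrow> P (And a \<theta>) \<or> P (And a (Neg \<theta>))"
    and mono: "\<And>a b. GLC (Imp a b) \<Longrightarrow> P a \<Longrightarrow> P b"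
  shows "P a \<Longrightarrow> \<exists>A \<subseteq> set xs. P (And a (diagram xs A))"
proof (induction xs arbitrary: a)
  case Nil
  have "P (And a (diagram [] {}))" by (rule mono[OF _ Nil], rule GLC_tautI) (simp add: diagram_def)
  then show ?case by blast
next
  case (Cons \<theta> xs)
  from split[OF Cons.prems] show ?case
  proof
    assume "P (And a \<theta>)"
    then obtain A where A: "A \<subseteq> set xs" "P (And (And a \<theta>) (diagram xs A))" using Cons.IH by blast
    have "P (And a (diagram (\<theta> # xs) (insert \<theta> A)))"
      by (rule mono[OF _ A(2)], rule GLC_tautI) (auto simp: tval_diagram)
    then show ?thesis using A(1) by (intro exI[of _ "insert \<theta> A"]) auto
  next
    assume "P (And a (Neg \<theta>))"
    then obtain A where A: "A \<subseteq> set xs" "P (And (And a (Neg \<theta>)) (diagram xs A))" using Cons.IH by blast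
    have "P (And a (diagram (\<theta> # xs) (A - {\<theta>})))"
      by (rule mono[OF _ A(2)], rule GLC_tautI) (auto simp: tval_diagram)
    then show ?thesis using A(1) by (intro exI[of _ "A - {\<theta>}"]) auto
  qed
qed

lemma lindenbaum_consistent:
  "consistent a \<Longrightarrow> \<exists>A \<subseteq> set xs. consistent (And a (diagram xs A))"
  using consistent_split consistent_mono by (rule lindenbaum[where P = consistent])

lemma lindenbaum_Dia:
  "consistent (And X (Dia Y)) \<Longrightarrow> \<exists>A \<subseteq> set xs. consistent (And X (Dia (And Y (diagram xs A))))"
  using consistent_Dia_split consistent_Dia_mono
  by (rule lindenbaum[where P = "\<lambda>Y. consistent (And X (Dia Y))"])

lemma GLC_Nxt_diagram: "GLC (Imp (diagram (map Nxt xs) (Nxt ` A)) (Nxt (diagram xs A)))"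
proof (induction xs)
  case Nil
  have "GLC (Nxt Top)" by (rule GLC.Nec_next, rule GLC_tautI) simp
  then show ?case by (rule GLC_taut_consequence) (simp add: diagram_def)
next
  case (Cons \<theta> xs)
  have "Nxt \<theta> \<in> Nxt ` A \<longleftrightarrow> \<theta> \<in> A" by auto
  then have "GLC (Imp (literal (Nxt ` A) (Nxt \<theta>)) (Nxt (literal A \<theta>)))"
    using GLC_Nxt_Neg_in[of \<theta>] by (auto simp: literal_def intro: GLC_tautI)
  with Cons.IH show ?case using GLC_Nxt_And_in[of "literal A \<theta>" "diagram xs A"]
    by (rule GLC_taut_consequence3) (auto simp: diagram_def)
qed

section \<open>Kripke semantics\<close>

locale glc_frame =
  fixes W :: "'w set" and R :: "'w \<Rightarrow> 'w \<Rightarrow> bool" and f :: "'w \<Rightarrow> 'w"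
  assumes finite_worlds: "finite W"
    and R_worlds: "R x y \<Longrightarrow> x \<in> W \<and> y \<in> W"
    and R_irrefl: "\<not> R x x"
    and R_trans: "R x y \<Longrightarrow> R y z \<Longrightarrow> R x z"
    and f_worlds: "x \<in> W \<Longrightarrow> f x \<in> W"
    and f_R: "R x y \<Longrightarrow> f x = f y \<or> R (f x) (f y)"

fun kripke_sem :: "'w set \<Rightarrow> ('w \<Rightarrow> 'w \<Rightarrow> bool) \<Rightarrow> ('w \<Rightarrow> 'w) \<Rightarrow> ('p \<Rightarrow> 'w set) \<Rightarrow> 'p form \<Rightarrow> 'w set"
  where
  "kripke_sem W R f V (Var p) = V p"
| "kripke_sem W R f V (And a b) = kripke_sem W R f V a \<inter> kripke_sem W R f V b"
| "kripke_sem W R f V (Neg a) = W - kripke_sem W R f V a"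
| "kripke_sem W R f V (Box a) = {x \<in> W. \<forall>y. R x y \<longrightarrow> y \<in> kripke_sem W R f V a}"
| "kripke_sem W R f V (Nxt a) = {x \<in> W. f x \<in> kripke_sem W R f V a}"

lemma kripke_sem_subset: "(\<forall>p. V p \<subseteq> W) \<Longrightarrow> kripke_sem W R f V a \<subseteq> W"
  by (induction a) auto

lemma kripke_sem_Imp:
  "x \<in> W \<Longrightarrow> x \<in> kripke_sem W R f V (Imp a b) \<longleftrightarrow> (x \<in> kripke_sem W R f V a \<longrightarrow> x \<in> kripke_sem W R f V b)"
  by (auto simp: Imp_def)

lemma kripke_sem_Iff:
  "x \<in> W \<Longrightarrow> x \<in> kripke_sem W R f V (Iff a b) \<longleftrightarrow> (x \<in> kripke_sem W R f V a \<longleftrightarrow> x \<in> kripke_sem W R f V b)"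
  by (auto simp: Iff_def Imp_def)

lemma tval_kripke_sem: "x \<in> W \<Longrightarrow> tval (\<lambda>b. x \<in> kripke_sem W R f V b) a \<longleftrightarrow> x \<in> kripke_sem W R f V a"
  by (induction a) auto

context glc_frame
begin

lemma exists_R_maximal:
  assumes "Q \<subseteq> W" "Q \<noteq> {}"
  shows "\<exists>z\<in>Q. \<forall>y\<in>Q. \<not> R z y"
proof -
  let ?r = "{(y, z). R z y}"
  have "?r \<subseteq> W \<times> W" using R_worlds by auto
  then have "finite ?r" using finite_worlds finite_subset by blast
  moreover have "trans ?r" using R_trans unfolding trans_def by blast
  then have "acyclic ?r" unfolding acyclic_def using R_irrefl by (simp add: trancl_id)
  ultimately have "wf ?r" by (rule finite_acyclic_wf)
  then obtain z where "z \<in> Q" "\<forall>y. (y, z) \<in> ?r \<longrightarrow> y \<notin> Q"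
    using assms(2) unfolding wf_eq_minimal by blast
  then show ?thesis by auto
qed

lemma kripke_sem_Loeb:
  assumes "x \<in> kripke_sem W R f V (Box (Imp (Box a) a))"
  shows "x \<in> kripke_sem W R f V (Box a)"
proof (rule ccontr)
  let ?Q = "{y. R x y \<and> y \<notin> kripke_sem W R f V a}"
  assume "x \<notin> kripke_sem W R f V (Box a)"
  then have "?Q \<noteq> {}" using assms by auto
  moreover have "?Q \<subseteq> W" using R_worlds by auto
  ultimately obtain z where z: "z \<in> ?Q" "\<forall>y\<in>?Q. \<not> R z y" using exists_R_maximal[of ?Q] by blast
  then have "z \<in> W" using R_worlds by auto
  moreover have "z \<in> kripke_sem W R f V (Box a)" using z R_trans[of x z] \<open>z \<in> W\<close> by auto
  moreover have "z \<in> kripke_sem W R f V (Imp (Box a) a)" using assms z(1) by auto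
  ultimately show False using z(1) kripke_sem_Imp[of z] by blast
qed

theorem GLC_sound:
  assumes V: "\<forall>p. V p \<subseteq> W"
  shows "GLC a \<Longrightarrow> kripke_sem W R f V a = W"
proof (induction rule: GLC.induct)
  have everywhere: "(\<And>x. x \<in> W \<Longrightarrow> x \<in> kripke_sem W R f V b) \<Longrightarrow> kripke_sem W R f V b = W" for b
    using kripke_sem_subset[OF V] by blast
  note simps = kripke_sem_Imp kripke_sem_Iff
  {
    case (Taut a)
    then show ?case using tval_kripke_sem by (metis taut_def everywhere)
  next
    case K
    show ?case by (rule everywhere) (use R_worlds in \<open>auto simp: simps\<close>)
  next
    case Four
    show ?case by (rule everywhere) (use R_trans R_worlds in \<open>auto simp: simps\<close>)
  next
    case L
    show ?case by (rule everywhere) (use kripke_sem_Loeb in \<open>auto simp: simps\<close>)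
  next
    case Next_neg
    show ?case by (rule everywhere) (use f_worlds kripke_sem_subset[OF V] in \<open>auto simp: simps\<close>)
  next
    case Next_and
    show ?case by (rule everywhere) (auto simp: simps)
  next
    case C
    show ?case by (rule everywhere) (use R_worlds in \<open>auto simp: simps dest: f_R\<close>)
  next
    case (MP a b)
    then show ?case by (metis everywhere kripke_sem_Imp)
  next
    case (Nec_box a)
    show ?case by (rule everywhere) (use Nec_box.IH R_worlds in auto)
  next
    case (Nec_next a)
    show ?case by (rule everywhere) (use Nec_next.IH f_worlds in auto)
  }
qed

lemma glc_frame_image:
  assumes "inj_on g W"
  shows "glc_frame (g ` W) (\<lambda>a b. \<exists>x y. a = g x \<and> b = g y \<and> R x y) (g \<circ> f \<circ> inv_into W g)"
proof
  fix a b assume "\<exists>x y. a = g x \<and> b = g y \<and> R x y"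
  then obtain x y where xy: "a = g x" "b = g y" "R x y" by blast
  then have "x \<in> W" "y \<in> W" using R_worlds by auto
  then show "a \<in> g ` W \<and> b \<in> g ` W" using xy by blast
  show "(g \<circ> f \<circ> inv_into W g) a = (g \<circ> f \<circ> inv_into W g) b \<or>
      (\<exists>x y. (g \<circ> f \<circ> inv_into W g) a = g x \<and> (g \<circ> f \<circ> inv_into W g) b = g y \<and> R x y)"
    using f_R[OF xy(3)] xy \<open>x \<in> W\<close> \<open>y \<in> W\<close> assms by auto
next
  fix a b c
  assume "\<exists>x y. a = g x \<and> b = g y \<and> R x y" "\<exists>x y. b = g x \<and> c = g y \<and> R x y"
  then show "\<exists>x y. a = g x \<and> c = g y \<and> R x y"
    using assms R_worlds R_trans by (metis inj_on_contraD)
qed (use finite_worlds R_irrefl R_worlds f_worlds assms in \<open>auto dest: inj_onD\<close>)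

lemma kripke_sem_image:
  assumes g: "inj_on g W" and V: "\<forall>p. V p \<subseteq> W"
  shows "x \<in> W \<Longrightarrow> g x \<in> kripke_sem (g ` W) (\<lambda>a b. \<exists>x y. a = g x \<and> b = g y \<and> R x y)
      (g \<circ> f \<circ> inv_into W g) (\<lambda>p. g ` V p) \<theta> \<longleftrightarrow> x \<in> kripke_sem W R f V \<theta>"
proof (induction \<theta> arbitrary: x)
  case (Var p)
  then show ?case using g V by (auto simp: inj_on_image_mem_iff)
next
  case (Box a)
  have "(\<exists>x' y. g x = g x' \<and> b = g y \<and> R x' y) \<longleftrightarrow> (\<exists>y. b = g y \<and> R x y)" for b
    using Box.prems R_worlds inj_on_eq_iff[OF g] by blast
  then show ?case using Box R_worlds by auto
next
  case (Nxt a)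
  then show ?case using g f_worlds by simp
qed auto

end

section \<open>The canonical countermodel\<close>

fun nxt_depth :: "'p form \<Rightarrow> nat" where
  "nxt_depth (Var p) = 0"
| "nxt_depth (And a b) = max (nxt_depth a) (nxt_depth b)"
| "nxt_depth (Neg a) = nxt_depth a"
| "nxt_depth (Box a) = nxt_depth a"
| "nxt_depth (Nxt a) = Suc (nxt_depth a)"

fun subforms :: "'p form \<Rightarrow> 'p form list" where
  "subforms (Var p) = [Var p]"
| "subforms (And a b) = And a b # subforms a @ subforms b"
| "subforms (Neg a) = Neg a # subforms a"
| "subforms (Box a) = Box a # subforms a"
| "subforms (Nxt a) = Nxt a # subforms a"

lemma subforms_self: "a \<in> set (subforms a)"
  by (cases a) auto

lemma subforms_trans: "b \<in> set (subforms a) \<Longrightarrow> set (subforms b) \<subseteq> set (subforms a)"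
  by (induction a) (auto simp: subforms_self)

lemma successively_remdups_adj_map:
  assumes "successively R xs"
    and "\<And>x y. x \<in> set xs \<Longrightarrow> y \<in> set xs \<Longrightarrow> R x y \<Longrightarrow> g x \<noteq> g y \<Longrightarrow> R' (g x) (g y)"
  shows "successively R' (remdups_adj (map g xs))"
  using assms
proof (induction xs rule: induct_list012)
  case (3 x y zs)
  then have "successively R' (remdups_adj (g y # map g zs))" by auto
  moreover have "g x \<noteq> g y \<Longrightarrow> R' (g x) (g y)" using 3 by auto
  ultimately show ?case by (cases "g x = g y") (auto, metis remdups_adj_Cons_alt successively.simps(3))
qed auto

lemma remdups_adj_append_prefix: "\<exists>zs. remdups_adj (xs @ ys) = remdups_adj xs @ zs"
proof (cases "xs = [] \<or> ys = []")
  case False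
  then obtain xs' x where "xs = xs' @ [x]" by (metis rev_exhaust)
  then have "remdups_adj (xs @ ys) = remdups_adj xs @ tl (remdups_adj (x # ys))"
    using remdups_adj_append by (metis append.assoc append_Cons append_Nil)
  then show ?thesis by blast
qed auto

locale canonical_model =
  fixes \<phi> :: "'p form"
begin

abbreviation N :: nat where
  "N \<equiv> nxt_depth \<phi>"

text \<open>After \<open>k\<close> steps of \<open>f\<close> at most \<open>N - k\<close> further Nxt-steps of \<open>\<phi>\<close> remain to be evaluated.\<close>

definition Cl :: "nat \<Rightarrow> 'p form set" where
  "Cl k = {(Nxt ^^ i) c | i c. i \<le> N - k \<and> c \<in> set (subforms \<phi>)}"

definition cl_list :: "nat \<Rightarrow> 'p form list" where
  "cl_list k = concat (map (\<lambda>i. map (Nxt ^^ i) (subforms \<phi>)) [0..<Suc (N - k)])"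

abbreviation diag :: "nat \<Rightarrow> 'p form set \<Rightarrow> 'p form" where
  "diag k A \<equiv> diagram (cl_list k) A"

lemma set_cl_list: "set (cl_list k) = Cl k"
  unfolding cl_list_def Cl_def by (auto simp del: upt_Suc simp: less_Suc_eq_le) blast

lemma finite_Cl: "finite (Cl k)"
  using set_cl_list by (metis List.finite_set)

lemma Cl_subset_Cl0: "Cl k \<subseteq> Cl 0"
  unfolding Cl_def by force

lemma phi_in_Cl0: "\<phi> \<in> Cl 0"
  unfolding Cl_def using subforms_self by force

lemma Cl_subforms:
  assumes "x \<in> Cl k" "x \<notin> range Nxt" "y \<in> set (subforms x)"
  shows "y \<in> Cl k"
proof -
  obtain i c where x: "x = (Nxt ^^ i) c" "i \<le> N - k" "c \<in> set (subforms \<phi>)"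
    using assms(1) unfolding Cl_def by blast
  have "i = 0" using assms(2) x(1) by (cases i) auto
  then have "y \<in> set (subforms \<phi>)" using x assms(3) subforms_trans by auto
  then show ?thesis unfolding Cl_def by force
qed

lemma Cl_And: "And a b \<in> Cl k \<Longrightarrow> a \<in> Cl k \<and> b \<in> Cl k"
  using Cl_subforms[of "And a b" k] subforms_self by auto

lemma Cl_Neg: "Neg a \<in> Cl k \<Longrightarrow> a \<in> Cl k"
  using Cl_subforms[of "Neg a" k] subforms_self by auto

lemma Cl_Box: "Box a \<in> Cl k \<Longrightarrow> a \<in> Cl k"
  using Cl_subforms[of "Box a" k] subforms_self by auto

lemma Cl_Nxt: "k < N \<Longrightarrow> Nxt a \<in> Cl k \<longleftrightarrow> a \<in> Cl (Suc k)"
proof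
  assume "k < N" "Nxt a \<in> Cl k"
  then obtain i c where x: "Nxt a = (Nxt ^^ i) c" "i \<le> N - k" "c \<in> set (subforms \<phi>)"
    unfolding Cl_def by blast
  show "a \<in> Cl (Suc k)"
  proof (cases i)
    case 0
    then have "a \<in> set (subforms \<phi>)" using x subforms_trans subforms_self by fastforce
    then show ?thesis unfolding Cl_def by force
  next
    case (Suc j)
    with x have "a = (Nxt ^^ j) c" "j \<le> N - Suc k" by auto
    then show ?thesis using x(3) unfolding Cl_def by blast
  qed
next
  assume "k < N" "a \<in> Cl (Suc k)"
  then obtain i c where "a = (Nxt ^^ i) c" "i \<le> N - Suc k" "c \<in> set (subforms \<phi>)"
    unfolding Cl_def by blast
  then have "Nxt a = (Nxt ^^ Suc i) c \<and> Suc i \<le> N - k \<and> c \<in> set (subforms \<phi>)"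
    using \<open>k < N\<close> by auto
  then show "Nxt a \<in> Cl k" unfolding Cl_def by blast
qed

lemma tval_diag: "\<theta> \<in> Cl k \<Longrightarrow> tval v (diag k A) \<Longrightarrow> tval v \<theta> \<longleftrightarrow> \<theta> \<in> A"
  by (simp add: tval_diagram set_cl_list)

definition atom :: "nat \<Rightarrow> 'p form set \<Rightarrow> bool" where
  "atom k A \<longleftrightarrow> A \<subseteq> Cl k \<and> consistent (diag k A)"

definition step :: "nat \<Rightarrow> 'p form set \<Rightarrow> 'p form set \<Rightarrow> bool" where
  "step k A B \<longleftrightarrow> consistent (And (diag k A) (Dia (diag k B)))"

lemma atom_satisfiable: "atom k A \<Longrightarrow> \<exists>v. \<forall>\<theta>\<in>Cl k. tval v \<theta> \<longleftrightarrow> \<theta> \<in> A"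
  unfolding atom_def using consistent_imp_satisfiable tval_diag by blast

lemma atom_And: "atom k A \<Longrightarrow> And a b \<in> Cl k \<Longrightarrow> And a b \<in> A \<longleftrightarrow> a \<in> A \<and> b \<in> A"
  using atom_satisfiable Cl_And tval.simps(2) by blast

lemma atom_Neg: "atom k A \<Longrightarrow> Neg a \<in> Cl k \<Longrightarrow> Neg a \<in> A \<longleftrightarrow> a \<notin> A"
  using atom_satisfiable Cl_Neg tval.simps(3) by blast

lemma step_Box:
  assumes "atom k A" "step k A B" "Box \<psi> \<in> A"
  shows "\<psi> \<in> B \<and> Box \<psi> \<in> B"
proof -
  have Cl: "Box \<psi> \<in> Cl k" "\<psi> \<in> Cl k" using assms(1,3) Cl_Box by (auto simp: atom_def)
  have "GLC (Imp (diag k A) (Box \<psi>))"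
    by (rule GLC_tautI) (use tval_diag[OF Cl(1)] assms(3) in auto)
  then have "GLC (Imp (diag k A) (Box (And \<psi> (Box \<psi>))))"
    using GLC.Four[of \<psi>] GLC_Box_And[of \<psi> "Box \<psi>"] by (rule GLC_taut_consequence3) auto
  with assms(2) have "consistent (And (diag k B) (And \<psi> (Box \<psi>)))"
    unfolding step_def by (rule consistent_Dia_Box)
  then obtain v where "tval v (diag k B)" "tval v \<psi>" "tval v (Box \<psi>)"
    using consistent_imp_satisfiable by fastforce
  then show ?thesis using Cl tval_diag by blast
qed

lemma exists_Box_witness:
  assumes A: "atom k A" and Box: "Box \<psi> \<in> Cl k" "Box \<psi> \<notin> A"
  shows "\<exists>B. atom k B \<and> step k A B \<and> \<psi> \<notin> B \<and> Box \<psi> \<in> B"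
proof -
  let ?P = "\<lambda>Y. consistent (And (diag k A) (Dia Y))"
  have "\<psi> \<in> Cl k" using Box(1) Cl_Box by blast
  have "GLC (Imp (diag k A) (Neg (Box \<psi>)))"
    by (rule GLC_tautI) (use tval_diag[OF Box(1)] Box(2) in auto)
  \<comment> \<open>Loeb's axiom, read contrapositively: some successor refutes \<open>\<psi>\<close> for the last time.\<close>
  then have "GLC (Imp (diag k A) (And (diag k A) (Dia (And (Box \<psi>) (Neg \<psi>)))))"
    using GLC.L[of \<psi>] by (rule GLC_taut_consequence2) (auto simp: Dia_def Imp_def)
  then have "?P (And (Box \<psi>) (Neg \<psi>))" by (rule consistent_mono) (use A in \<open>simp add: atom_def\<close>)
  then have "\<exists>B \<subseteq> set (cl_list k). ?P (And (And (Box \<psi>) (Neg \<psi>)) (diag k B))"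
    by (rule lindenbaum_Dia)
  then obtain B where B: "B \<subseteq> set (cl_list k)" "?P (And (And (Box \<psi>) (Neg \<psi>)) (diag k B))"
    by blast
  have "step k A B" unfolding step_def
    by (rule consistent_Dia_mono[OF _ B(2)], rule GLC_tautI) simp
  moreover have c: "consistent (And (And (Box \<psi>) (Neg \<psi>)) (diag k B))"
    using B(2) by (rule consistent_Dia)
  then have "atom k B" using B(1) consistent_conjunct by (auto simp: atom_def set_cl_list)
  moreover obtain v where "tval v (And (And (Box \<psi>) (Neg \<psi>)) (diag k B))"
    using c consistent_imp_satisfiable by blast
  then have "\<psi> \<notin> B \<and> Box \<psi> \<in> B" using tval_diag[OF \<open>\<psi> \<in> Cl k\<close>] tval_diag[OF Box(1)] by auto
  ultimately show ?thesis by blast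
qed

lemma exists_atom_refuting:
  assumes "\<not> GLC \<phi>"
  shows "\<exists>A. atom 0 A \<and> \<phi> \<notin> A"
proof -
  have "consistent (Neg \<phi>)"
    using assms GLC_taut_consequence[of "Neg (Neg \<phi>)" \<phi>] by (auto simp: consistent_def)
  then obtain A where A: "A \<subseteq> set (cl_list 0)" "consistent (And (Neg \<phi>) (diag 0 A))"
    using lindenbaum_consistent by blast
  then have "atom 0 A" using consistent_conjunct by (auto simp: atom_def set_cl_list)
  moreover obtain v where "tval v (And (Neg \<phi>) (diag 0 A))"
    using A(2) consistent_imp_satisfiable by blast
  then have "\<phi> \<notin> A" using tval_diag[OF phi_in_Cl0] by auto
  ultimately show ?thesis by blast
qed

lemma GLC_diag_disjoint:
  assumes "A \<subseteq> Cl k" "B \<subseteq> Cl k" "A \<noteq> B"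
  shows "GLC (Imp (diag k A) (Neg (diag k B)))"
proof (rule GLC_tautI)
  fix v
  have "A = B" if "tval v (diag k A)" "tval v (diag k B)"
  proof -
    have "\<theta> \<in> A \<longleftrightarrow> \<theta> \<in> B" if "\<theta> \<in> Cl k" for \<theta>
      using tval_diag[OF that] \<open>tval v (diag k A)\<close> \<open>tval v (diag k B)\<close> by blast
    then show ?thesis using assms(1,2) by blast
  qed
  then show "tval v (Imp (diag k A) (Neg (diag k B)))" using assms(3) by auto
qed

definition next_atom :: "nat \<Rightarrow> 'p form set \<Rightarrow> 'p form set" where
  "next_atom k A = {\<theta> \<in> Cl (Suc k). Nxt \<theta> \<in> A}"

lemma GLC_diag_next_atom:
  assumes "k < N"
  shows "GLC (Imp (diag k A) (Nxt (diag (Suc k) (next_atom k A))))"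
proof -
  have "GLC (Imp (diag k A) (diagram (map Nxt (cl_list (Suc k))) (Nxt ` next_atom k A)))"
  proof (rule GLC_tautI)
    fix v
    have "tval v (Nxt \<theta>) \<longleftrightarrow> Nxt \<theta> \<in> A" if "tval v (diag k A)" "\<theta> \<in> Cl (Suc k)" for \<theta>
      using tval_diag Cl_Nxt assms that by blast
    then show "tval v (Imp (diag k A) (diagram (map Nxt (cl_list (Suc k))) (Nxt ` next_atom k A)))"
      by (auto simp: tval_diagram set_cl_list next_atom_def)
  qed
  then show ?thesis using GLC_Nxt_diagram by (rule GLC_taut_consequence2) auto
qed

lemma atom_next_atom:
  assumes "atom k A" "k < N"
  shows "atom (Suc k) (next_atom k A)"
proof -
  have "consistent (Nxt (diag (Suc k) (next_atom k A)))"
    using GLC_diag_next_atom[OF assms(2)] assms(1) consistent_mono unfolding atom_def by blast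
  then show ?thesis using consistent_Nxt by (auto simp: atom_def next_atom_def)
qed

text \<open>Axiom C is what makes \<open>next_atom\<close> preserve the accessibility between atoms.\<close>

lemma step_next_atom:
  assumes A: "atom k A" and B: "atom k B" and "step k A B" "k < N"
    and neq: "next_atom k A \<noteq> next_atom k B"
  shows "step (Suc k) (next_atom k A) (next_atom k B)"
proof (rule ccontr)
  let ?a = "diag (Suc k) (next_atom k A)" and ?b = "diag (Suc k) (next_atom k B)"
  assume "\<not> ?thesis"
  then have "GLC (Neg (And ?a (Dia ?b)))" by (simp add: step_def consistent_def)
  then have "GLC (Imp ?a (Box (Neg ?b)))" by (rule GLC_taut_consequence) (auto simp: Dia_def)
  then have 1: "GLC (Imp (Nxt ?a) (Nxt (Box (Neg ?b))))" by (rule GLC_Nxt_mono)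
  have "GLC (Imp ?a (Neg ?b))"
    by (rule GLC_diag_disjoint) (use neq in \<open>auto simp: next_atom_def\<close>)
  then have 2: "GLC (Imp (Nxt ?a) (Nxt (Neg ?b)))" by (rule GLC_Nxt_mono)
  have "GLC (Imp (Nxt ?a) (Box (Nxt (Neg ?b))))"
    using 1 2 GLC.C[of "Neg ?b"] by (rule GLC_taut_consequence3) auto
  with GLC_diag_next_atom[OF \<open>k < N\<close>, of A] have "GLC (Imp (diag k A) (Box (Nxt (Neg ?b))))"
    by (rule GLC_taut_consequence2) auto
  with \<open>step k A B\<close> have "consistent (And (diag k B) (Nxt (Neg ?b)))"
    unfolding step_def by (rule consistent_Dia_Box)
  moreover have "GLC (Neg (And (diag k B) (Nxt (Neg ?b))))"
    using GLC_diag_next_atom[OF \<open>k < N\<close>, of B] GLC_Nxt_Neg_out[of ?b]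
    by (rule GLC_taut_consequence2) auto
  ultimately show False by (simp add: consistent_def)
qed

definition chain :: "nat \<Rightarrow> 'p form set list \<Rightarrow> bool" where
  "chain k s \<longleftrightarrow> s \<noteq> [] \<and> (\<forall>A\<in>set s. atom k A) \<and> successively (step k) s"

lemma chain_last_atom: "chain k s \<Longrightarrow> atom k (last s)"
  unfolding chain_def by auto

lemma chain_snoc: "chain k s \<Longrightarrow> atom k B \<Longrightarrow> step k (last s) B \<Longrightarrow> chain k (s @ [B])"
  unfolding chain_def by (auto simp: successively_append_iff)

lemma chain_suffix: "chain k (s @ u) \<Longrightarrow> s \<noteq> [] \<Longrightarrow> chain k (last s # u)"
  unfolding chain_def by (auto simp: successively_append_iff successively_Cons)

lemma chain_Box: "chain k (A # s) \<Longrightarrow> Box \<psi> \<in> A \<Longrightarrow> B \<in> set s \<Longrightarrow> \<psi> \<in> B \<and> Box \<psi> \<in> B"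
proof (induction s arbitrary: A)
  case (Cons C s)
  then have "\<psi> \<in> C \<and> Box \<psi> \<in> C" using step_Box by (auto simp: chain_def)
  moreover have "chain k (C # s)" using Cons.prems(1) by (auto simp: chain_def)
  ultimately show ?case using Cons by (cases "B = C") auto
qed simp

lemma chain_next:
  assumes "chain k s" "k < N"
  shows "chain (Suc k) (remdups_adj (map (next_atom k) s))"
proof -
  have "successively (step (Suc k)) (remdups_adj (map (next_atom k) s))"
    by (rule successively_remdups_adj_map[where R = "step k"])
      (use assms step_next_atom in \<open>auto simp: chain_def\<close>)
  then show ?thesis using assms atom_next_atom by (auto simp: chain_def)
qed

definition box_count :: "'p form set \<Rightarrow> nat" where
  "box_count A = card (A \<inter> range Box)"

abbreviation M :: nat where
  "M \<equiv> card (Cl 0)"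

text \<open>A Box-witness appended to a chain has strictly more boxed formulas than its predecessor,
  so such extensions do not raise the potential; bounding it bounds the length of chains.\<close>

definition potential :: "'p form set list \<Rightarrow> nat" where
  "potential s = length s + M - box_count (last s)"

definition worlds :: "(nat \<times> 'p form set list) set" where
  "worlds = {(k, s). k \<le> N \<and> chain k s \<and> potential s \<le> Suc k * Suc M}"

definition prolongs :: "nat \<times> 'p form set list \<Rightarrow> nat \<times> 'p form set list \<Rightarrow> bool" where
  "prolongs x y \<longleftrightarrow> x \<in> worlds \<and> y \<in> worlds \<and> fst y = fst x \<and> (\<exists>u. u \<noteq> [] \<and> snd y = snd x @ u)"

fun next_world :: "nat \<times> 'p form set list \<Rightarrow> nat \<times> 'p form set list" where
  "next_world (k, s) = (if k < N then (Suc k, remdups_adj (map (next_atom k) s)) else (k, s))"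

definition val :: "'p \<Rightarrow> (nat \<times> 'p form set list) set" where
  "val p = {x \<in> worlds. Var p \<in> last (snd x)}"

lemma atom_subset_Cl0: "atom k A \<Longrightarrow> A \<subseteq> Cl 0"
  using Cl_subset_Cl0 by (auto simp: atom_def)

lemma box_count_le: "A \<subseteq> Cl 0 \<Longrightarrow> box_count A \<le> M"
  unfolding box_count_def by (rule card_mono[OF finite_Cl]) auto

lemma length_le_potential: "chain k s \<Longrightarrow> length s \<le> potential s"
  using box_count_le[OF atom_subset_Cl0[OF chain_last_atom]] unfolding potential_def by fastforce

lemma finite_worlds: "finite worlds"
proof (rule finite_subset)
  show "worlds \<subseteq> {..N} \<times> {s. set s \<subseteq> Pow (Cl 0) \<and> length s \<le> Suc N * Suc M}"
  proof
    fix x assume "x \<in> worlds"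
    then obtain k s where x: "x = (k, s)" "k \<le> N" "chain k s" "potential s \<le> Suc k * Suc M"
      by (auto simp: worlds_def)
    moreover have "Suc k * Suc M \<le> Suc N * Suc M" using x(2) by (intro mult_le_mono1) simp
    ultimately have "length s \<le> Suc N * Suc M" "set s \<subseteq> Pow (Cl 0)"
      using length_le_potential atom_subset_Cl0 by (fastforce simp: chain_def)+
    then show "x \<in> {..N} \<times> {s. set s \<subseteq> Pow (Cl 0) \<and> length s \<le> Suc N * Suc M}"
      using x by auto
  qed
  show "finite ({..N} \<times> {s. set s \<subseteq> Pow (Cl 0) \<and> length s \<le> Suc N * Suc M})"
    using finite_lists_length_le[of "Pow (Cl 0)"] finite_Cl by blast
qed

lemma next_world_in_worlds:
  assumes "x \<in> worlds"
  shows "next_world x \<in> worlds"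
proof -
  obtain k s where x: "x = (k, s)" by fastforce
  show ?thesis
  proof (cases "k < N")
    case True
    let ?t = "remdups_adj (map (next_atom k) s)"
    have "chain k s" "potential s \<le> Suc k * Suc M" using assms x by (auto simp: worlds_def)
    then have "length ?t \<le> Suc k * Suc M"
      using length_le_potential remdups_adj_length[of "map (next_atom k) s"] by fastforce
    then have "potential ?t \<le> Suc (Suc k) * Suc M" unfolding potential_def by simp
    then show ?thesis using x True chain_next \<open>chain k s\<close> by (simp add: worlds_def)
  qed (use assms x in simp)
qed

lemma glc_frame_worlds: "glc_frame worlds prolongs next_world"
proof
  fix x y assume "prolongs x y"
  then obtain k s u where xy: "x = (k, s)" "y = (k, s @ u)" "u \<noteq> []" "x \<in> worlds" "y \<in> worlds"
    unfolding prolongs_def by (metis prod.collapse)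
  obtain zs where zs: "remdups_adj (map (next_atom k) (s @ u)) = remdups_adj (map (next_atom k) s) @ zs"
    using remdups_adj_append_prefix by (metis map_append)
  have "next_world x \<in> worlds" "next_world y \<in> worlds" using xy next_world_in_worlds by blast+
  then show "next_world x = next_world y \<or> prolongs (next_world x) (next_world y)"
    using xy zs by (cases "zs = []") (auto simp: prolongs_def)
qed (auto simp: finite_worlds prolongs_def next_world_in_worlds)

lemma prolongation_refuting:
  assumes x: "(k, s) \<in> worlds" and Box: "Box a \<in> Cl k" "Box a \<notin> last s"
  shows "\<exists>t. prolongs (k, s) (k, t) \<and> a \<notin> last t"
proof -
  have ch: "chain k s" and bound: "k \<le> N" "potential s \<le> Suc k * Suc M"
    using x by (auto simp: worlds_def)
  obtain B where B: "atom k B" "step k (last s) B" "a \<notin> B" "Box a \<in> B"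
    using exists_Box_witness[OF chain_last_atom[OF ch] Box] by blast
  have "last s \<inter> range Box \<subset> B \<inter> range Box"
    using step_Box[OF chain_last_atom[OF ch] B(2)] Box(2) B(4) by blast
  moreover have "finite (B \<inter> range Box)"
    using atom_subset_Cl0[OF B(1)] finite_Cl finite_subset by blast
  ultimately have "box_count (last s) < box_count B"
    unfolding box_count_def by (rule psubset_card_mono[rotated])
  moreover have "box_count B \<le> M" using box_count_le atom_subset_Cl0 B(1) by blast
  ultimately have "potential (s @ [B]) \<le> potential s" unfolding potential_def by simp
  then have "(k, s @ [B]) \<in> worlds" using chain_snoc[OF ch B(1,2)] bound by (simp add: worlds_def)
  then show ?thesis using x B(3) unfolding prolongs_def by (intro exI[of _ "s @ [B]"]) auto
qed

lemma prolongs_Box: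
  assumes "prolongs (k, s) (l, t)" "Box a \<in> last s"
  shows "a \<in> last t"
proof -
  have "(k, s) \<in> worlds" "(l, t) \<in> worlds" "l = k" "\<exists>u. u \<noteq> [] \<and> t = s @ u"
    using assms(1) unfolding prolongs_def by auto
  then obtain u where u: "u \<noteq> []" "t = s @ u" and "chain k s" "chain k (s @ u)"
    by (auto simp: worlds_def)
  then have "chain k (last s # u)" using chain_suffix by (simp add: chain_def)
  moreover have "last t \<in> set u" using u by simp
  ultimately show ?thesis using chain_Box assms(2) by blast
qed

lemma world_atom: "(k, s) \<in> worlds \<Longrightarrow> atom k (last s)"
  using chain_last_atom by (simp add: worlds_def)

lemma truth_lemma:
  "(k, s) \<in> worlds \<Longrightarrow> \<theta> \<in> Cl k \<Longrightarrow> nxt_depth \<theta> \<le> N - k \<Longrightarrow>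
    (k, s) \<in> kripke_sem worlds prolongs next_world val \<theta> \<longleftrightarrow> \<theta> \<in> last s"
proof (induction \<theta> arbitrary: k s)
  case (Var p)
  then show ?case by (simp add: val_def)
next
  case (And a b)
  then have "a \<in> Cl k" "b \<in> Cl k" using Cl_And by blast+
  then show ?case using And atom_And[OF world_atom] by simp
next
  case (Neg a)
  then have "a \<in> Cl k" using Cl_Neg by blast
  then show ?case using Neg atom_Neg[OF world_atom] by simp
next
  case (Box a)
  have IH: "(k, t) \<in> worlds \<Longrightarrow> (k, t) \<in> kripke_sem worlds prolongs next_world val a \<longleftrightarrow> a \<in> last t"
    for t using Box Cl_Box by simp
  show ?case
  proof
    assume "(k, s) \<in> kripke_sem worlds prolongs next_world val (Box a)"
    then have "a \<in> last t" if "prolongs (k, s) (k, t)" for t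
      using that IH by (auto simp: prolongs_def)
    then show "Box a \<in> last s" using prolongation_refuting Box.prems by blast
  next
    assume "Box a \<in> last s"
    have "y \<in> kripke_sem worlds prolongs next_world val a" if y: "prolongs (k, s) y" for y
    proof -
      obtain t where "y = (k, t)" "y \<in> worlds" using y unfolding prolongs_def by (cases y) auto
      then show ?thesis using IH prolongs_Box \<open>Box a \<in> last s\<close> y by blast
    qed
    then show "(k, s) \<in> kripke_sem worlds prolongs next_world val (Box a)" using Box.prems by simp
  qed
next
  case (Nxt a)
  then have k: "k < N" and a: "a \<in> Cl (Suc k)" "nxt_depth a \<le> N - Suc k"
    using Cl_Nxt by auto
  let ?t = "remdups_adj (map (next_atom k) s)"
  have "s \<noteq> []" using Nxt.prems(1) by (simp add: worlds_def chain_def)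
  have "(Suc k, ?t) \<in> worlds" using next_world_in_worlds[OF Nxt.prems(1)] k by simp
  then have "(k, s) \<in> kripke_sem worlds prolongs next_world val (Nxt a) \<longleftrightarrow> a \<in> last ?t"
    using Nxt.IH a Nxt.prems(1) k by simp
  also have "\<dots> \<longleftrightarrow> Nxt a \<in> last s" using \<open>s \<noteq> []\<close> a by (simp add: last_map next_atom_def)
  finally show ?case .
qed

theorem countermodel:
  assumes "\<not> GLC \<phi>"
  shows "\<exists>x\<in>worlds. x \<notin> kripke_sem worlds prolongs next_world val \<phi>"
proof -
  obtain A where A: "atom 0 A" "\<phi> \<notin> A" using exists_atom_refuting[OF assms] by blast
  have "potential [A] \<le> Suc M" by (simp add: potential_def)
  then have W: "(0, [A]) \<in> worlds" using A(1) by (simp add: worlds_def chain_def)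
  have "nxt_depth \<phi> \<le> N - 0" by simp
  with W have "(0, [A]) \<notin> kripke_sem worlds prolongs next_world val \<phi>"
    using truth_lemma[OF W phi_in_Cl0] A(2) by simp
  with W show ?thesis by blast
qed

end

section \<open>Finite scattered spaces as frames\<close>

definition derived_rel :: "'a topology \<Rightarrow> 'a \<Rightarrow> 'a \<Rightarrow> bool" where
  "derived_rel T x y \<longleftrightarrow> x \<noteq> y \<and> x \<in> T closure_of {y}"

lemma derived_rel_topspace:
  assumes "derived_rel T x y"
  shows "x \<in> topspace T \<and> y \<in> topspace T"
proof -
  have x: "x \<in> T closure_of {y}" using assms by (simp add: derived_rel_def)
  moreover have "y \<in> topspace T"
  proof (rule ccontr)
    assume "y \<notin> topspace T"
    then have "T closure_of {y} = {}" by (simp add: closure_of_eq_empty_gen disjnt_def)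
    with x show False by simp
  qed
  ultimately show ?thesis using closure_of_subset_topspace[of T "{y}"] by auto
qed

lemma in_derived_set_of_iff_closure_of: "x \<in> T derived_set_of A \<longleftrightarrow> x \<in> T closure_of (A - {x})"
  by (auto simp: in_derived_set_of in_closure_of)

lemma derived_set_of_finite:
  assumes "finite (topspace T)"
  shows "T derived_set_of A = {x. \<exists>y\<in>A. derived_rel T x y}"
proof -
  have "x \<in> T derived_set_of A \<longleftrightarrow> (\<exists>y\<in>A. derived_rel T x y)" for x
  proof -
    have fin: "finite (topspace T \<inter> A - {x})" using assms by blast
    have "x \<in> T derived_set_of A \<longleftrightarrow> x \<in> T closure_of (topspace T \<inter> A - {x})"
      using in_derived_set_of_iff_closure_of[of x T "topspace T \<inter> A"] by simp
    also have "\<dots> \<longleftrightarrow> (\<exists>y \<in> topspace T \<inter> A - {x}. x \<in> T closure_of {y})"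
      using closure_of_Union[of "(\<lambda>y. {y}) ` (topspace T \<inter> A - {x})" T] fin by auto
    also have "\<dots> \<longleftrightarrow> (\<exists>y\<in>A. derived_rel T x y)"
    proof
      assume "\<exists>y\<in>A. derived_rel T x y"
      then obtain y where "y \<in> A" "derived_rel T x y" by blast
      then show "\<exists>y \<in> topspace T \<inter> A - {x}. x \<in> T closure_of {y}"
        using derived_rel_topspace[of T x y] by (auto simp: derived_rel_def)
    qed (auto simp: derived_rel_def)
    finally show ?thesis .
  qed
  then show ?thesis by blast
qed

lemma glc_frame_derived_rel:
  assumes fin: "finite (topspace T)" and sc: "scattered T" and f: "continuous_map T T f"
  shows "glc_frame (topspace T) (derived_rel T) f"
proof
  fix x y z assume xy: "derived_rel T x y" and yz: "derived_rel T y z"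
  have "T closure_of {y} \<subseteq> T closure_of {z}"
    using closure_of_mono[of "{y}" "T closure_of {z}" T] yz by (simp add: derived_rel_def)
  then have "x \<in> T closure_of {z}" using xy by (auto simp: derived_rel_def)
  moreover have "x \<noteq> z"
  proof
    assume "x = z"
    then have "{x, y} \<subseteq> T derived_set_of {x, y}"
      unfolding derived_set_of_finite[OF fin] using xy yz by auto
    moreover have "{x, y} \<subseteq> topspace T" using derived_rel_topspace[OF xy] by simp
    ultimately show False using sc unfolding scattered_def by blast
  qed
  ultimately show "derived_rel T x z" by (simp add: derived_rel_def)
next
  fix x y assume "derived_rel T x y"
  moreover have "f ` (T closure_of {y}) \<subseteq> T closure_of (f ` {y})"
    by (rule continuous_map_image_closure_subset[OF f])
  ultimately have "f x \<in> T closure_of {f y}" by (auto simp: derived_rel_def)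
  then show "f x = f y \<or> derived_rel T (f x) (f y)" by (auto simp: derived_rel_def)
next
  fix x assume "x \<in> topspace T"
  then show "f x \<in> topspace T" using f by (simp add: continuous_map_def Pi_iff)
qed (simp_all add: fin derived_rel_topspace, simp add: derived_rel_def)

lemma sem_eq_kripke_sem:
  assumes "finite (topspace T)"
  shows "sem T f \<nu> \<theta> = kripke_sem (topspace T) (derived_rel T) f \<nu> \<theta>"
  by (induction \<theta>) (auto simp: derived_set_of_finite[OF assms] dest: derived_rel_topspace)

theorem GLC_valid_on_finite_scattered:
  assumes "GLC \<phi>" "DTS T f" "finite (topspace T)" "scattered T"
  shows "valid_on T f \<phi>"
proof -
  interpret glc_frame "topspace T" "derived_rel T" f
    using assms(2-4) glc_frame_derived_rel by (simp add: DTS_def)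
  show ?thesis
    unfolding valid_on_def sem_eq_kripke_sem[OF assms(3)] using GLC_sound[OF _ assms(1)] by blast
qed

definition upset_topology :: "'w set \<Rightarrow> ('w \<Rightarrow> 'w \<Rightarrow> bool) \<Rightarrow> 'w topology" where
  "upset_topology W R = topology (\<lambda>U. U \<subseteq> W \<and> (\<forall>x\<in>U. \<forall>y. R x y \<longrightarrow> y \<in> U))"

context glc_frame
begin

lemma openin_upset_topology:
  "openin (upset_topology W R) U \<longleftrightarrow> U \<subseteq> W \<and> (\<forall>x\<in>U. \<forall>y. R x y \<longrightarrow> y \<in> U)"
proof -
  have "istopology (\<lambda>U. U \<subseteq> W \<and> (\<forall>x\<in>U. \<forall>y. R x y \<longrightarrow> y \<in> U))"
    unfolding istopology_def by blast
  then show ?thesis by (simp add: upset_topology_def)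
qed

lemma topspace_upset_topology: "topspace (upset_topology W R) = W"
  using R_worlds unfolding topspace_def openin_upset_topology by blast

lemma derived_rel_upset_topology: "derived_rel (upset_topology W R) x y \<longleftrightarrow> R x y"
proof
  assume "derived_rel (upset_topology W R) x y"
  then have "x \<in> W" "x \<noteq> y" "\<forall>U. openin (upset_topology W R) U \<and> x \<in> U \<longrightarrow> y \<in> U"
    by (auto simp: derived_rel_def in_closure_of topspace_upset_topology)
  moreover have "openin (upset_topology W R) (insert x {y. R x y})"
    using \<open>x \<in> W\<close> R_worlds R_trans by (auto simp: openin_upset_topology)
  ultimately show "R x y" by blast
next
  assume "R x y"
  then show "derived_rel (upset_topology W R) x y"
    using R_worlds R_irrefl
    by (auto simp: derived_rel_def in_closure_of topspace_upset_topology openin_upset_topology)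
qed

lemma finite_scattered_DTS_upset_topology:
  "DTS (upset_topology W R) f \<and> finite (topspace (upset_topology W R)) \<and> scattered (upset_topology W R)"
proof (intro conjI)
  show "DTS (upset_topology W R) f"
    using f_worlds R_worlds f_R
    unfolding DTS_def continuous_map_def topspace_upset_topology openin_upset_topology by fastforce
  show "finite (topspace (upset_topology W R))"
    using finite_worlds by (simp add: topspace_upset_topology)
  have "S = {}" if "S \<subseteq> W" "S \<subseteq> {x. \<exists>y\<in>S. R x y}" for S
    using exists_R_maximal[of S] that by blast
  then show "scattered (upset_topology W R)"
    unfolding scattered_def derived_set_of_finite[OF \<open>finite (topspace _)\<close>]
    by (simp add: topspace_upset_topology derived_rel_upset_topology)
qed

lemma sem_upset_topology: "sem (upset_topology W R) f V \<theta> = kripke_sem W R f V \<theta>"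
proof -
  have "derived_rel (upset_topology W R) = R" using derived_rel_upset_topology by blast
  then show ?thesis
    using sem_eq_kripke_sem[of "upset_topology W R"] finite_worlds by (simp add: topspace_upset_topology)
qed

lemma nat_DTS_refuting:
  assumes V: "\<forall>p. V p \<subseteq> W" and x: "x \<in> W" "x \<notin> kripke_sem W R f V \<phi>"
  shows "\<exists>(T :: nat topology) f. DTS T f \<and> finite (topspace T) \<and> scattered T \<and> \<not> valid_on T f \<phi>"
proof -
  obtain g :: "'w \<Rightarrow> nat" where g: "inj_on g W"
    using finite_imp_inj_to_nat_seg[OF finite_worlds] by blast
  define R' where "R' = (\<lambda>a b. \<exists>x y. a = g x \<and> b = g y \<and> R x y)"
  define f' where "f' = g \<circ> f \<circ> inv_into W g"
  define V' where "V' = (\<lambda>p. g ` V p)"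
  interpret image: glc_frame "g ` W" R' f'
    unfolding R'_def f'_def using g by (rule glc_frame_image)
  have "g x \<notin> kripke_sem (g ` W) R' f' V' \<phi>"
    using kripke_sem_image[OF g V x(1)] x(2) unfolding R'_def f'_def V'_def by blast
  then have "g x \<notin> sem (upset_topology (g ` W) R') f' V' \<phi>"
    by (simp add: image.sem_upset_topology)
  moreover have "g x \<in> topspace (upset_topology (g ` W) R')" "\<forall>p. V' p \<subseteq> g ` W"
    using x(1) V image.topspace_upset_topology by (auto simp: V'_def)
  ultimately show ?thesis
    using image.finite_scattered_DTS_upset_topology image.topspace_upset_topology
    unfolding valid_on_def by blast
qed

end

theorem not_GLC_refuted_on_nat:
  assumes "\<not> GLC \<phi>"
  shows "\<exists>(T :: nat topology) f. DTS T f \<and> finite (topspace T) \<and> scattered T \<and> \<not> valid_on T f \<phi>"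
proof -
  interpret canonical_model \<phi> .
  interpret glc_frame worlds prolongs next_world by (rule glc_frame_worlds)
  obtain x where "x \<in> worlds" "x \<notin> kripke_sem worlds prolongs next_world val \<phi>"
    using countermodel[OF assms] by blast
  moreover have "\<forall>p. val p \<subseteq> worlds" by (auto simp: val_def)
  ultimately show ?thesis by (intro nat_DTS_refuting)
qed

theorem mainTheorem7:
  fixes \<phi> :: "'p form"
  shows "GLC \<phi> \<longleftrightarrow>
    (\<forall>(T :: nat topology) f. DTS T f \<and> finite (topspace T) \<and> scattered T
        \<longrightarrow> valid_on T f \<phi>)"
  using GLC_valid_on_finite_scattered not_GLC_refuted_on_nat by blast

end
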